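(* Let $k\ge 2$ be an integer. For any positive integer $c$, \[ z_k(c)=\xi_k\sum_{t\in\mathbb{N}\cap[c^{1/k},\infty)}\frac{|\mu(t)|}{t^{2k}}\prod_{p\mid t}\frac{1}{1-\frac{2}{p^k}}, \qquad\text{where}\qquad \xi_k:=\prod_{p}\Bigl(1-(p^k-1)^{-2}\Bigr). \]
   Context: $\mu$ is the Möbius function, $\mu_{k+1}(q)$ is the indicator function of the $(k+1)$-free positive integers, and $p$ always denotes a prime (products over $p$ are over all primes, or over primes dividing the indicated integer). For $c\in\mathbb{N}$, \[ z_k(c):=\sum_{\substack{r\in\mathbb{N}\\ r\ge c}}\ \sum_{d\in\mathbb{N}}\mu(d)\,\mu_{k+1}(dr)\prod_{p\mid dr}\frac{1}{(p^k-1)^2}. \] *)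

theory Defs
  imports "HOL-Analysis.Analysis" "HOL-Computational_Algebra.Squarefree"
begin

definition moebius :: "nat \<Rightarrow> int" where
  "moebius n = (if n = 0 then 0 else if squarefree n then (-1) ^ card (prime_factors n) else 0)"

definition kfree_ind :: "nat \<Rightarrow> nat \<Rightarrow> real" where
  "kfree_ind m q = (if q > 0 \<and> (\<forall>p. prime p \<longrightarrow> \<not> p ^ m dvd q) then 1 else 0)"

definition z :: "nat \<Rightarrow> nat \<Rightarrow> real" where
  "z k c = (\<Sum>\<^sub>\<infinity> r \<in> {r. r \<ge> 1 \<and> r \<ge> c}.
             \<Sum>\<^sub>\<infinity> d \<in> {d. d \<ge> 1}.
               real_of_int (moebius d) * kfree_ind (k + 1) (d * r) *
               (\<Prod>p\<in>prime_factors (d * r). 1 / (real p ^ k - 1) ^ 2))"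

definition xi :: "nat \<Rightarrow> real" where
  "xi k = (\<Prod>n. if prime n then 1 - 1 / (real n ^ k - 1) ^ 2 else 1)"

end

theory Submission
  imports Defs
begin

(* Write a(p) = (p^k - 1)^(-2) and w(n) (rad_weight) for the product of a(p) over the primes p | n.
   For fixed r the inner sum over d of mu(d) mu_(k+1)(dr) w(dr) vanishes unless r = t^k with t
   squarefree: if a prime divides r more than k times every term is zero, and otherwise some
   prime q dividing r has multiplicity below k, so that d |-> q d (for q not dividing d) pairs
   off the terms with opposite signs.  For r = t^k exactly the d coprime to t survive, and the
   sum is w(t) times the sum of mu(d) w(d) over d coprime to t, which is the Euler product
   xi_k with the factors 1 - a(p), p | t, removed.  Finally a/(1 - a) = p^(-2k) / (1 - 2 p^(-k)). *)

lemma prime_factors_prod_primes: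
  fixes S :: "nat set"
  assumes "finite S" "\<And>p. p \<in> S \<Longrightarrow> prime p"
  shows "prime_factors (\<Prod>S) = S"
  using assms by (subst prime_factors_prod) (auto simp: prime_prime_factors dest: prime_gt_0_nat)

lemma squarefree_prod_primes:
  fixes S :: "nat set"
  assumes "finite S" "\<And>p. p \<in> S \<Longrightarrow> prime p"
  shows "squarefree (\<Prod>S)"
  using assms
  by (intro squarefree_prod_coprime) (auto intro: squarefree_prime simp: primes_coprime)

lemma squarefree_pos_nat: "squarefree (n :: nat) \<Longrightarrow> n > 0"
  by (cases n) auto

lemma moebius_eq_0_if_not_squarefree: "\<not> squarefree n \<Longrightarrow> moebius n = 0"
  by (simp add: moebius_def)

lemma abs_moebius_squarefree: "squarefree n \<Longrightarrow> \<bar>moebius n\<bar> = 1"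
  by (simp add: moebius_def squarefree_pos_nat)

lemma moebius_prod_primes:
  fixes S :: "nat set"
  assumes "finite S" "\<And>p. p \<in> S \<Longrightarrow> prime p"
  shows "moebius (\<Prod>S) = (-1) ^ card S"
  using squarefree_prod_primes[OF assms] prime_factors_prod_primes[OF assms]
  by (simp add: moebius_def squarefree_pos_nat)

lemma prod_prime_factors_squarefree:
  fixes n :: nat
  assumes "squarefree n"
  shows "\<Prod>(prime_factors n) = n"
proof -
  have n: "n \<noteq> 0" using squarefree_pos_nat[OF assms] by simp
  have "\<Prod>(prime_factors n) = (\<Prod>p\<in>prime_factors n. p ^ multiplicity p n)"
    using assms squarefree_factorial_semiring'[OF n] by (intro prod.cong) auto
  also have "\<dots> = n" using prod_prime_factors[OF n] by simp
  finally show ?thesis .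
qed

lemma moebius_mult_prime:
  fixes q n :: nat
  assumes "prime q" "\<not> q dvd n" "n > 0"
  shows "moebius (q * n) = - moebius n"
proof -
  have "coprime q n" using assms by (simp add: prime_imp_coprime)
  then have "squarefree (q * n) \<longleftrightarrow> squarefree n"
    using squarefree_mult_coprime squarefree_prime[OF assms(1)] squarefree_multD by blast
  moreover have "prime_factors (q * n) = insert q (prime_factors n)"
    using assms by (simp add: prime_factors_product prime_prime_factors prime_gt_0_nat)
  moreover have "q \<notin> prime_factors n" using assms by auto
  ultimately show ?thesis using assms by (auto simp: moebius_def prime_gt_0_nat)
qed

lemma moebius_eq_0_if_square_dvd:
  fixes q n :: nat
  assumes "prime q" "q ^ 2 dvd n"
  shows "moebius n = 0"
  using assms by (intro moebius_eq_0_if_not_squarefree not_squarefreeI) auto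

lemma kfree_ind_altdef:
  "kfree_ind m n = (if n > 0 \<and> (\<forall>p. prime p \<longrightarrow> multiplicity p n < m) then 1 else 0)"
proof (cases "n > 0")
  case True
  then have "p ^ m dvd n \<longleftrightarrow> m \<le> multiplicity p n" if "prime p" for p
    using that by (intro power_dvd_iff_le_multiplicity) auto
  then show ?thesis unfolding kfree_ind_def by (meson not_le)
qed (simp add: kfree_ind_def)

lemma prime_factors_prod_power:
  fixes n :: nat
  assumes "n > 0" "\<And>p. p \<in> prime_factors n \<Longrightarrow> multiplicity p n = k"
  shows "(\<Prod>(prime_factors n)) ^ k = n"
proof -
  have "(\<Prod>(prime_factors n)) ^ k = (\<Prod>p\<in>prime_factors n. p ^ multiplicity p n)"
    using assms(2) by (simp add: prod_power_distrib)
  also have "\<dots> = n" using assms(1) by (simp add: prod_prime_factors)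
  finally show ?thesis .
qed

lemma prime_factors_power_pos:
  fixes n :: nat
  assumes "k > 0"
  shows "prime_factors (n ^ k) = prime_factors n"
  using assms by (cases "n = 0") (auto simp: in_prime_factors_iff prime_dvd_power_iff zero_power)

lemma infsum_eq_0_if_mult_antisym:
  fixes f :: "nat \<Rightarrow> 'a :: banach" and q :: nat
  assumes "f summable_on {d. d \<ge> 1}" "q > 0"
    and antisym: "\<And>d. d \<ge> 1 \<Longrightarrow> \<not> q dvd d \<Longrightarrow> f (q * d) = - f d"
    and vanish: "\<And>d. q ^ 2 dvd d \<Longrightarrow> f d = 0"
  shows "(\<Sum>\<^sub>\<infinity>d\<in>{d. d \<ge> 1}. f d) = 0"
proof -
  define A where "A = {d::nat. d \<ge> 1 \<and> \<not> q dvd d}"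
  define B where "B = {d::nat. d \<ge> 1 \<and> q dvd d}"
  have "(\<Sum>\<^sub>\<infinity>d\<in>B. f d) = (\<Sum>\<^sub>\<infinity>d\<in>(*) q ` A. f d)"
  proof (rule infsum_cong_neutral)
    fix d assume "d \<in> B - (*) q ` A"
    then have "q ^ 2 dvd d" unfolding A_def B_def power2_eq_square
      by (auto elim!: dvdE)
    then show "f d = 0" by (rule vanish)
  qed (use \<open>q > 0\<close> in \<open>auto simp: A_def B_def\<close>)
  also have "\<dots> = (\<Sum>\<^sub>\<infinity>d\<in>A. f (q * d))"
    using \<open>q > 0\<close> by (subst infsum_reindex) (auto simp: inj_on_def comp_def)
  also have "\<dots> = (\<Sum>\<^sub>\<infinity>d\<in>A. - f d)"
    using antisym by (intro infsum_cong) (auto simp: A_def)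
  also have "\<dots> = - (\<Sum>\<^sub>\<infinity>d\<in>A. f d)"
    by (rule infsum_uminus)
  finally have "(\<Sum>\<^sub>\<infinity>d\<in>B. f d) = - (\<Sum>\<^sub>\<infinity>d\<in>A. f d)" .
  moreover have "{d. d \<ge> 1} = A \<union> B" "A \<inter> B = {}" unfolding A_def B_def by auto
  ultimately show ?thesis
    using assms(1) by (simp add: infsum_Un_disjoint summable_on_subset_banach)
qed

lemma kfree_ind_mult_power:
  fixes d t :: nat
  assumes "k > 0" "squarefree d" "squarefree t"
  shows "kfree_ind (k + 1) (d * t ^ k) = (if coprime d t then 1 else 0)"
proof -
  have pos: "d > 0" "t > 0" using assms by (simp_all add: squarefree_pos_nat)
  have mult: "multiplicity p (d * t ^ k) = multiplicity p d + k * multiplicity p t"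
    if "prime p" for p
    using that pos by (simp add: prime_elem_multiplicity_mult_distrib prime_elem_multiplicity_power_distrib)
  show ?thesis
  proof (cases "coprime d t")
    case True
    then have "squarefree (d * t)" using assms by (intro squarefree_mult_coprime)
    have "multiplicity p (d * t ^ k) < k + 1" if p: "prime p" for p
    proof -
      have "multiplicity p (d * t) \<le> 1"
        using \<open>squarefree (d * t)\<close> p pos by (simp add: squarefree_factorial_semiring'')
      then have "multiplicity p d + multiplicity p t \<le> 1"
        using p pos by (simp add: prime_elem_multiplicity_mult_distrib)
      then have "multiplicity p d + k * multiplicity p t \<le> k"
        using \<open>k > 0\<close> by (cases "multiplicity p t") auto
      then show ?thesis using mult[OF p] by simp
    qed
    then show ?thesis using True pos by (simp add: kfree_ind_altdef)
  next
    case False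
    then obtain p where p: "prime p" "p dvd d" "p dvd t"
      using prime_factor_nat[of "gcd d t"] by (auto simp: coprime_iff_gcd_eq_1)
    then have "multiplicity p d \<ge> 1" "multiplicity p t \<ge> 1"
      using pos by (auto intro!: multiplicity_geI)
    moreover from this(2) have "k * 1 \<le> k * multiplicity p t" by (rule mult_le_mono2)
    ultimately have "multiplicity p (d * t ^ k) \<ge> k + 1"
      using mult[OF p(1)] by linarith
    then show ?thesis using False p(1) by (auto simp: kfree_ind_altdef)
  qed
qed

lemma squarefree_in_image_Pow_primes:
  fixes d r N :: nat
  assumes "squarefree d" "coprime d r" "d \<le> N"
  shows "d \<in> (\<lambda>S. \<Prod>S) ` Pow {p. prime p \<and> p \<le> N \<and> \<not> p dvd r}"
proof
  show "d = \<Prod>(prime_factors d)" using assms(1) by (simp add: prod_prime_factors_squarefree)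
  have "prime p \<and> p \<le> N \<and> \<not> p dvd r" if "p \<in> prime_factors d" for p
  proof -
    have p: "prime p" "p dvd d" using that by (auto simp: in_prime_factors_iff)
    then have "p \<le> N"
      using \<open>d \<le> N\<close> dvd_imp_le[OF p(2) squarefree_pos_nat[OF \<open>squarefree d\<close>]] by linarith
    moreover have "\<not> p dvd r"
      using p \<open>coprime d r\<close> coprime_common_divisor_nat[of d r p] not_prime_1 by blast
    ultimately show ?thesis using p by simp
  qed
  then show "prime_factors d \<in> Pow {p. prime p \<and> p \<le> N \<and> \<not> p dvd r}" by blast
qed

lemma image_Pow_primes_subset_squarefree_coprime:
  fixes P :: "nat set"
  assumes "finite P" "\<And>p. p \<in> P \<Longrightarrow> prime p \<and> \<not> p dvd r"
  shows "(\<lambda>S. \<Prod>S) ` Pow P \<subseteq> {d. squarefree d \<and> coprime d r}"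
proof clarify
  fix S assume "S \<subseteq> P"
  have "finite S" using \<open>S \<subseteq> P\<close> assms(1) by (rule finite_subset)
  moreover have "\<And>p. p \<in> S \<Longrightarrow> prime p" using \<open>S \<subseteq> P\<close> assms(2) by blast
  moreover have "coprime (\<Prod>S) r"
    using \<open>S \<subseteq> P\<close> assms(2) by (intro prod_coprime_left prime_imp_coprime) auto
  ultimately show "squarefree (\<Prod>S) \<and> coprime (\<Prod>S) r"
    using squarefree_prod_primes by blast
qed

lemma filterlim_Pow_primes_coprime:
  fixes r :: nat
  shows "filterlim (\<lambda>N. (\<lambda>S. \<Prod>S) ` Pow {p. prime p \<and> p \<le> N \<and> \<not> p dvd r})
           (finite_subsets_at_top {d. squarefree d \<and> coprime d r}) sequentially"
proof (subst filterlim_finite_subsets_at_top, safe)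
  fix X :: "nat set"
  assume X: "finite X" "X \<subseteq> {d. squarefree d \<and> coprime d r}"
  define P where "P N = {p. prime p \<and> p \<le> N \<and> \<not> p dvd r}" for N
  have fin: "finite (P N)" for N unfolding P_def by (rule finite_subset[of _ "{..N}"]) auto
  show "\<forall>\<^sub>F N in sequentially. finite ((\<lambda>S. \<Prod>S) ` Pow (P N)) \<and>
          X \<subseteq> (\<lambda>S. \<Prod>S) ` Pow (P N) \<and> (\<lambda>S. \<Prod>S) ` Pow (P N) \<subseteq> {d. squarefree d \<and> coprime d r}"
    unfolding eventually_sequentially
  proof (intro exI allI impI conjI)
    fix N assume N: "Max (insert 0 X) \<le> N"
    show "finite ((\<lambda>S. \<Prod>S) ` Pow (P N))" using fin by simp
    show "(\<lambda>S. \<Prod>S) ` Pow (P N) \<subseteq> {d. squarefree d \<and> coprime d r}"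
      using fin by (rule image_Pow_primes_subset_squarefree_coprime) (simp add: P_def)
    show "X \<subseteq> (\<lambda>S. \<Prod>S) ` Pow (P N)"
    proof
      fix x assume "x \<in> X"
      then have "x \<le> N" using X(1) N by (meson Max_ge finite_insert insertCI order_trans)
      then show "x \<in> (\<lambda>S. \<Prod>S) ` Pow (P N)"
        using \<open>x \<in> X\<close> X(2) squarefree_in_image_Pow_primes unfolding P_def by blast
    qed
  qed
qed

(* The bound a p <= 1/p^2 makes mu(d) w(d) dominated by 1/d^2 and the Euler product
   absolutely convergent. *)
locale prime_weight =
  fixes a :: "nat \<Rightarrow> real"
  assumes weight_nonneg: "prime p \<Longrightarrow> 0 \<le> a p"
    and weight_le: "prime p \<Longrightarrow> a p \<le> 1 / real p ^ 2"
begin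

lemma weight_lt_1:
  assumes "prime p"
  shows "a p < 1"
proof -
  have "2 ^ 2 \<le> real p ^ 2" using prime_ge_2_nat[OF assms] by (intro power_mono) auto
  then have "1 / real p ^ 2 < 1" by (simp add: divide_less_eq)
  then show ?thesis using weight_le[OF assms] by linarith
qed

definition rad_weight :: "nat \<Rightarrow> real" where
  "rad_weight n = (\<Prod>p\<in>prime_factors n. a p)"

lemma rad_weight_nonneg: "0 \<le> rad_weight n"
  unfolding rad_weight_def by (intro prod_nonneg weight_nonneg) auto

lemma rad_weight_mult_le:
  assumes "d > 0" "r > 0"
  shows "rad_weight (d * r) \<le> rad_weight d"
proof -
  have pf: "prime_factors (d * r) = prime_factors d \<union> (prime_factors r - prime_factors d)"
    using assms by (auto simp: prime_factors_product)
  have "rad_weight (d * r) = rad_weight d * (\<Prod>p\<in>prime_factors r - prime_factors d. a p)"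
    unfolding rad_weight_def pf by (rule prod.union_disjoint) auto
  also have "\<dots> \<le> rad_weight d * 1"
    using weight_nonneg weight_lt_1 rad_weight_nonneg
    by (intro mult_left_mono prod_le_1) (auto intro: less_imp_le)
  finally show ?thesis by simp
qed

lemma rad_weight_mult_coprime:
  assumes "coprime d t" "d > 0" "t > 0"
  shows "rad_weight (d * t) = rad_weight d * rad_weight t"
proof -
  have "prime_factors d \<inter> prime_factors t = {}"
    using assms(1) by (auto simp: in_prime_factors_iff dest: coprime_common_divisor_nat)
  then show ?thesis
    using assms(2,3) unfolding rad_weight_def by (simp add: prime_factors_product prod.union_disjoint)
qed

lemma rad_weight_power: "k > 0 \<Longrightarrow> rad_weight (n ^ k) = rad_weight n"
  by (simp add: rad_weight_def prime_factors_power_pos)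

lemma abs_moebius_rad_weight_le: "\<bar>real_of_int (moebius d)\<bar> * rad_weight d \<le> 1 / real d ^ 2"
proof (cases "squarefree d")
  case True
  have "rad_weight d \<le> (\<Prod>p\<in>prime_factors d. 1 / real p ^ 2)"
    unfolding rad_weight_def by (intro prod_mono) (auto intro: weight_nonneg weight_le)
  also have "\<dots> = 1 / real (\<Prod>(prime_factors d)) ^ 2"
    by (simp add: prod_dividef prod_power_distrib)
  finally show ?thesis
    using True by (simp add: abs_moebius_squarefree prod_prime_factors_squarefree flip: of_int_abs)
qed (simp add: moebius_eq_0_if_not_squarefree)

lemma summable_on_if_le_moebius_rad_weight:
  fixes f :: "nat \<Rightarrow> real"
  assumes "\<And>d. \<bar>f d\<bar> \<le> \<bar>real_of_int (moebius d)\<bar> * rad_weight d"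
  shows "f summable_on A"
proof -
  have "summable (\<lambda>n. inverse (real n ^ 2))" by (rule inverse_power_summable) simp
  then have "(\<lambda>n. inverse (real n ^ 2)) summable_on UNIV"
    by (subst summable_on_UNIV_nonneg_real_iff) simp_all
  then have "(\<lambda>n. 1 / real n ^ 2) summable_on UNIV" by (simp add: inverse_eq_divide)
  then have "(\<lambda>n. 1 / real n ^ 2) summable_on A" by (rule summable_on_subset) simp
  then have "(\<lambda>d. \<bar>f d\<bar>) summable_on A"
  proof (rule summable_on_comparison_test)
    show "\<bar>f d\<bar> \<le> 1 / real d ^ 2" for d
      using assms[of d] abs_moebius_rad_weight_le[of d] by linarith
  qed simp
  then show ?thesis by (subst summable_on_iff_abs_summable_on_real) simp
qed

lemma sum_moebius_rad_weight_Pow: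
  assumes "finite A" "\<And>p. p \<in> A \<Longrightarrow> prime p"
  shows "(\<Sum>d\<in>(\<lambda>S. \<Prod>S) ` Pow A. real_of_int (moebius d) * rad_weight d) = (\<Prod>p\<in>A. 1 - a p)"
proof -
  have primes: "finite S" "\<And>p. p \<in> S \<Longrightarrow> prime p" if "S \<in> Pow A" for S
    using that assms finite_subset by auto
  have "inj_on (\<lambda>S. \<Prod>S) (Pow A)"
    by (rule inj_on_inverseI[where g = prime_factors]) (simp add: primes prime_factors_prod_primes)
  then have "(\<Sum>d\<in>(\<lambda>S. \<Prod>S) ` Pow A. real_of_int (moebius d) * rad_weight d)
      = (\<Sum>S\<in>Pow A. real_of_int (moebius (\<Prod>S)) * rad_weight (\<Prod>S))"
    by (simp add: sum.reindex)
  also have "\<dots> = (\<Sum>S\<in>Pow A. (-1) ^ card S * (\<Prod>p\<in>S. a p) * (\<Prod>p\<in>A - S. 1))"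
    using primes
    by (intro sum.cong) (simp_all add: moebius_prod_primes prime_factors_prod_primes rad_weight_def)
  also have "\<dots> = (\<Prod>p\<in>A. 1 - a p)"
    by (rule prod_diff_conv_sum[symmetric]) (rule assms(1))
  finally show ?thesis .
qed

definition euler_prod :: real where
  "euler_prod = (\<Prod>n. if prime n then 1 - a n else 1)"

lemma convergent_prod_euler_factors: "convergent_prod (\<lambda>n. if prime n then 1 - a n else 1)"
proof -
  have "summable (\<lambda>n. inverse (real n ^ 2))" by (rule inverse_power_summable) simp
  then have "summable (\<lambda>n. norm ((if prime n then 1 - a n else 1) - 1))"
    by (rule summable_comparison_test')
       (use weight_nonneg weight_le in \<open>simp add: inverse_eq_divide\<close>)
  then show ?thesis
    by (intro abs_convergent_prod_imp_convergent_prod summable_imp_abs_convergent_prod)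
qed

lemma tendsto_prod_primes_not_dvd:
  assumes "r > 0"
  shows "(\<lambda>N. \<Prod>p | prime p \<and> p \<le> N \<and> \<not> p dvd r. 1 - a p)
           \<longlonglongrightarrow> euler_prod / (\<Prod>p\<in>prime_factors r. 1 - a p)"
proof -
  define C where "C = (\<Prod>p\<in>prime_factors r. 1 - a p)"
  have "C > 0" unfolding C_def by (intro prod_pos) (simp add: in_prime_factors_iff weight_lt_1)
  then have "C \<noteq> 0" by simp
  have "(\<lambda>N. \<Prod>n\<le>N. if prime n then 1 - a n else 1) \<longlonglongrightarrow> euler_prod"
    unfolding euler_prod_def by (rule convergent_prod_LIMSEQ[OF convergent_prod_euler_factors])
  then have "(\<lambda>N. (\<Prod>n\<le>N. if prime n then 1 - a n else 1) / C) \<longlonglongrightarrow> euler_prod / C"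
    using \<open>C \<noteq> 0\<close> by (intro tendsto_divide tendsto_const)
  moreover have "(\<Prod>n\<le>N. if prime n then 1 - a n else 1) / C
      = (\<Prod>p | prime p \<and> p \<le> N \<and> \<not> p dvd r. 1 - a p)" if "N \<ge> r" for N
  proof -
    have "p \<le> N" if "p \<in> prime_factors r" for p
      using that \<open>N \<ge> r\<close> assms dvd_imp_le[of p r] by (auto simp: in_prime_factors_iff)
    then have "{n \<in> {..N}. prime n} = {p. prime p \<and> p \<le> N \<and> \<not> p dvd r} \<union> prime_factors r"
      using assms by (auto simp: in_prime_factors_iff)
    then have "(\<Prod>n\<le>N. if prime n then 1 - a n else 1)
        = (\<Prod>p\<in>{p. prime p \<and> p \<le> N \<and> \<not> p dvd r} \<union> prime_factors r. 1 - a p)"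
      by (simp add: prod.inter_filter[symmetric])
    also have "\<dots> = (\<Prod>p | prime p \<and> p \<le> N \<and> \<not> p dvd r. 1 - a p) * C"
      unfolding C_def
      by (rule prod.union_disjoint) (auto simp: in_prime_factors_iff intro: finite_subset[of _ "{..N}"])
    finally show ?thesis using \<open>C \<noteq> 0\<close> by simp
  qed
  ultimately show ?thesis
    unfolding C_def by (rule Lim_transform_eventually[OF _ eventually_sequentiallyI])
qed

lemma has_sum_moebius_rad_weight_coprime:
  assumes "r > 0"
  shows "((\<lambda>d. real_of_int (moebius d) * rad_weight d)
           has_sum euler_prod / (\<Prod>p\<in>prime_factors r. 1 - a p)) {d. d \<ge> 1 \<and> coprime d r}"
proof -
  define f where "f d = real_of_int (moebius d) * rad_weight d" for d
  define D where "D = {d. squarefree d \<and> coprime d r}"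
  define P where "P N = {p. prime p \<and> p \<le> N \<and> \<not> p dvd r}" for N
  have "(f has_sum infsum f D) D"
    by (intro has_sum_infsum summable_on_if_le_moebius_rad_weight)
       (simp add: f_def abs_mult rad_weight_nonneg)
  then have "(\<lambda>N. sum f ((\<lambda>S. \<Prod>S) ` Pow (P N))) \<longlonglongrightarrow> infsum f D"
    unfolding has_sum_def P_def D_def using filterlim_Pow_primes_coprime by (rule filterlim_compose)
  moreover have "sum f ((\<lambda>S. \<Prod>S) ` Pow (P N)) = (\<Prod>p\<in>P N. 1 - a p)" for N
    unfolding f_def P_def
    by (rule sum_moebius_rad_weight_Pow) (auto intro: finite_subset[of _ "{..N}"])
  ultimately have "infsum f D = euler_prod / (\<Prod>p\<in>prime_factors r. 1 - a p)"
    using tendsto_prod_primes_not_dvd[OF assms] LIMSEQ_unique by (simp add: P_def)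
  with \<open>(f has_sum infsum f D) D\<close> have "(f has_sum euler_prod / (\<Prod>p\<in>prime_factors r. 1 - a p)) D"
    by simp
  then show ?thesis
    unfolding f_def D_def
    by (rule has_sum_cong_neutral[THEN iffD1, rotated -1])
       (auto simp: moebius_eq_0_if_not_squarefree squarefree_pos_nat Suc_le_eq)
qed

definition kfree_sum :: "nat \<Rightarrow> nat \<Rightarrow> real" where
  "kfree_sum m r = (\<Sum>\<^sub>\<infinity>d\<in>{d. d \<ge> 1}.
     real_of_int (moebius d) * kfree_ind m (d * r) * rad_weight (d * r))"

lemma summable_on_kfree_terms:
  assumes "r > 0"
  shows "(\<lambda>d. real_of_int (moebius d) * kfree_ind m (d * r) * rad_weight (d * r)) summable_on A"
proof (rule summable_on_if_le_moebius_rad_weight)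
  fix d :: nat
  show "\<bar>real_of_int (moebius d) * kfree_ind m (d * r) * rad_weight (d * r)\<bar>
        \<le> \<bar>real_of_int (moebius d)\<bar> * rad_weight d"
  proof (cases "d = 0")
    case False
    have "kfree_ind m (d * r) * rad_weight (d * r) \<le> rad_weight (d * r)"
      by (simp add: kfree_ind_def rad_weight_nonneg)
    also have "\<dots> \<le> rad_weight d" using False assms by (simp add: rad_weight_mult_le)
    finally show ?thesis
      by (simp add: abs_mult kfree_ind_def rad_weight_nonneg mult.assoc mult_left_mono)
  qed (simp add: moebius_def)
qed

lemma kfree_sum_eq_0_if_multiplicity_ge:
  assumes "prime p" "multiplicity p r \<ge> m" "r > 0"
  shows "kfree_sum m r = 0"
  unfolding kfree_sum_def
proof (rule infsum_0)
  fix d :: nat assume "d \<in> {d. d \<ge> 1}"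
  then have "multiplicity p (d * r) \<ge> m"
    using assms by (simp add: prime_elem_multiplicity_mult_distrib)
  then have "kfree_ind m (d * r) = 0" using assms(1) by (auto simp: kfree_ind_altdef)
  then show "real_of_int (moebius d) * kfree_ind m (d * r) * rad_weight (d * r) = 0" by simp
qed

lemma kfree_sum_eq_0_if_multiplicity_less:
  assumes q: "prime q" "q dvd r" and "multiplicity q r + 1 < m" "r > 0"
  shows "kfree_sum m r = 0"
  unfolding kfree_sum_def
proof (rule infsum_eq_0_if_mult_antisym)
  show "(\<lambda>d. real_of_int (moebius d) * kfree_ind m (d * r) * rad_weight (d * r)) summable_on {d. d \<ge> 1}"
    using assms(4) by (rule summable_on_kfree_terms)
  show "q > 0" using q by (simp add: prime_gt_0_nat)
next
  fix d :: nat assume d: "d \<ge> 1" "\<not> q dvd d"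
  have "multiplicity p (q * d * r) < m \<longleftrightarrow> multiplicity p (d * r) < m" if p: "prime p" for p
  proof (cases "p = q")
    case True
    then show ?thesis using assms d
      by (simp add: prime_elem_multiplicity_mult_distrib not_dvd_imp_multiplicity_0 prime_gt_0_nat)
  next
    case False
    then show ?thesis using assms d p
      by (simp add: prime_elem_multiplicity_mult_distrib prime_multiplicity_other prime_gt_0_nat)
  qed
  then have "kfree_ind m (q * d * r) = kfree_ind m (d * r)"
    using assms d by (simp add: kfree_ind_altdef prime_gt_0_nat)
  moreover have "prime_factors (q * d * r) = prime_factors (d * r)"
    using q d \<open>r > 0\<close> by (auto simp: prime_factors_product prime_prime_factors prime_gt_0_nat)
  moreover have "moebius (q * d) = - moebius d" using q d by (simp add: moebius_mult_prime)
  ultimately show "real_of_int (moebius (q * d)) * kfree_ind m (q * d * r) * rad_weight (q * d * r)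
      = - (real_of_int (moebius d) * kfree_ind m (d * r) * rad_weight (d * r))"
    by (simp add: rad_weight_def)
next
  fix d :: nat assume "q ^ 2 dvd d"
  then show "real_of_int (moebius d) * kfree_ind m (d * r) * rad_weight (d * r) = 0"
    using moebius_eq_0_if_square_dvd[OF q(1)] by simp
qed

lemma kfree_sum_eq_0_unless_squarefree_power:
  assumes "k > 0" "r > 0" "\<And>t. squarefree t \<Longrightarrow> r \<noteq> t ^ k"
  shows "kfree_sum (k + 1) r = 0"
proof (cases "\<exists>p. prime p \<and> multiplicity p r \<ge> k + 1")
  case True
  then show ?thesis using kfree_sum_eq_0_if_multiplicity_ge assms(2) by blast
next
  case False
  have "\<exists>q\<in>prime_factors r. multiplicity q r \<noteq> k"
  proof (rule ccontr)
    assume "\<not> ?thesis"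
    then have "(\<Prod>(prime_factors r)) ^ k = r" using assms(2) prime_factors_prod_power by auto
    moreover have "squarefree (\<Prod>(prime_factors r))" by (rule squarefree_prod_primes) auto
    ultimately show False using assms(3) by metis
  qed
  then obtain q where "prime q" "q dvd r" "multiplicity q r \<noteq> k"
    by (auto simp: in_prime_factors_iff)
  moreover from this(1) False have "multiplicity q r \<le> k" by auto
  ultimately show ?thesis using kfree_sum_eq_0_if_multiplicity_less assms(2) by simp
qed

lemma kfree_term_squarefree_power:
  assumes "k > 0" "squarefree t" "d \<ge> 1"
  shows "real_of_int (moebius d) * kfree_ind (k + 1) (d * t ^ k) * rad_weight (d * t ^ k)
       = (if coprime d t then rad_weight t * (real_of_int (moebius d) * rad_weight d) else 0)"
proof (cases "squarefree d")
  case True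
  then show ?thesis
    using assms kfree_ind_mult_power[OF assms(1) True assms(2)]
    by (simp add: rad_weight_mult_coprime rad_weight_power squarefree_pos_nat)
qed (simp add: moebius_eq_0_if_not_squarefree)

lemma kfree_sum_squarefree_power:
  assumes "k > 0" "squarefree t"
  shows "kfree_sum (k + 1) (t ^ k) = euler_prod * (\<Prod>p\<in>prime_factors t. a p / (1 - a p))"
proof -
  have "kfree_sum (k + 1) (t ^ k)
      = (\<Sum>\<^sub>\<infinity>d\<in>{d. d \<ge> 1 \<and> coprime d t}. rad_weight t * (real_of_int (moebius d) * rad_weight d))"
    unfolding kfree_sum_def using kfree_term_squarefree_power[OF assms]
    by (intro infsum_cong_neutral) auto
  also have "\<dots> = rad_weight t * (euler_prod / (\<Prod>p\<in>prime_factors t. 1 - a p))"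
    using has_sum_moebius_rad_weight_coprime[OF squarefree_pos_nat[OF assms(2)]]
    by (simp add: infsum_cmult_right' infsumI)
  also have "\<dots> = euler_prod * (\<Prod>p\<in>prime_factors t. a p / (1 - a p))"
    by (simp add: rad_weight_def prod_dividef)
  finally show ?thesis .
qed

lemma infsum_kfree_sum_eq_infsum_powers:
  assumes "k > 0"
  shows "(\<Sum>\<^sub>\<infinity>r\<in>{r. r \<ge> 1 \<and> r \<ge> c}. kfree_sum (k + 1) r)
       = (\<Sum>\<^sub>\<infinity>t\<in>{t. t \<ge> 1 \<and> c \<le> t ^ k}. kfree_sum (k + 1) (t ^ k))"
proof -
  have "(\<Sum>\<^sub>\<infinity>r\<in>{r. r \<ge> 1 \<and> r \<ge> c}. kfree_sum (k + 1) r)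
      = (\<Sum>\<^sub>\<infinity>r\<in>(\<lambda>t. t ^ k) ` {t. t \<ge> 1 \<and> c \<le> t ^ k}. kfree_sum (k + 1) r)"
  proof (rule infsum_cong_neutral)
    fix r assume "r \<in> {r. r \<ge> 1 \<and> r \<ge> c} - (\<lambda>t. t ^ k) ` {t. t \<ge> 1 \<and> c \<le> t ^ k}"
    then show "kfree_sum (k + 1) r = 0"
      using assms by (intro kfree_sum_eq_0_unless_squarefree_power) (auto dest!: squarefree_pos_nat)
  qed auto
  also have "\<dots> = (\<Sum>\<^sub>\<infinity>t\<in>{t. t \<ge> 1 \<and> c \<le> t ^ k}. kfree_sum (k + 1) (t ^ k))"
    using assms by (subst infsum_reindex) (auto simp: inj_on_def power_eq_iff_eq_base comp_def)
  finally show ?thesis .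
qed

end

definition z_weight :: "nat \<Rightarrow> nat \<Rightarrow> real" where
  "z_weight k p = 1 / (real p ^ k - 1) ^ 2"

lemma prime_add_two_le_power:
  assumes "k \<ge> 2" "prime p"
  shows "real p + 2 \<le> real p ^ k"
proof -
  have p: "real p \<ge> 2" using prime_ge_2_nat[OF assms(2)] by simp
  then have "real p * 2 \<le> real p * real p" by (intro mult_left_mono) auto
  also have "\<dots> \<le> real p ^ k"
    using p assms(1) power_increasing[of 2 k "real p"] by (simp add: power2_eq_square)
  finally show ?thesis using p by linarith
qed

lemma prime_weight_z_weight:
  assumes "k \<ge> 2"
  shows "prime_weight (z_weight k)"
proof
  fix p :: nat assume p: "prime p"
  show "0 \<le> z_weight k p" by (simp add: z_weight_def)
  have "real p \<le> real p ^ k - 1" using prime_add_two_le_power[OF assms p] by linarith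
  then have "real p ^ 2 \<le> (real p ^ k - 1) ^ 2" by (intro power_mono) auto
  then show "z_weight k p \<le> 1 / real p ^ 2"
    unfolding z_weight_def using prime_gt_0_nat[OF p] by (intro divide_left_mono) auto
qed

lemma inverse_square_pred_ratio:
  fixes x :: real
  assumes "x > 2"
  shows "1 / (x - 1) ^ 2 / (1 - 1 / (x - 1) ^ 2) = 1 / x ^ 2 * (1 / (1 - 2 / x))"
proof -
  have "(x - 1) ^ 2 - 1 = x * (x - 2)" by (simp add: power2_eq_square algebra_simps)
  moreover have "(x - 1) ^ 2 \<noteq> 0" "x * (x - 2) \<noteq> 0" using assms by auto
  ultimately have "1 / (x - 1) ^ 2 / (1 - 1 / (x - 1) ^ 2) = 1 / (x * (x - 2))"
    by (simp add: field_simps)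
  also have "\<dots> = 1 / x ^ 2 * (1 / (1 - 2 / x))"
    using assms by (simp add: field_simps power2_eq_square)
  finally show ?thesis .
qed

lemma z_weight_ratio:
  assumes "k \<ge> 2" "prime p"
  shows "z_weight k p / (1 - z_weight k p) = 1 / real p ^ (2 * k) * (1 / (1 - 2 / real p ^ k))"
proof -
  have "real p ^ k > 2" using prime_add_two_le_power[OF assms] prime_gt_0_nat[OF assms(2)] by linarith
  moreover have "real p ^ (2 * k) = (real p ^ k) ^ 2" by (simp add: mult.commute power_mult)
  ultimately show ?thesis unfolding z_weight_def by (simp only: inverse_square_pred_ratio)
qed

lemma prod_z_weight_ratio_squarefree:
  assumes "k \<ge> 2" "squarefree t"
  shows "(\<Prod>p\<in>prime_factors t. z_weight k p / (1 - z_weight k p))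
       = \<bar>real_of_int (moebius t)\<bar> / real t ^ (2 * k) * (\<Prod>p\<in>prime_factors t. 1 / (1 - 2 / real p ^ k))"
proof -
  have "(\<Prod>p\<in>prime_factors t. z_weight k p / (1 - z_weight k p))
      = (\<Prod>p\<in>prime_factors t. 1 / real p ^ (2 * k)) * (\<Prod>p\<in>prime_factors t. 1 / (1 - 2 / real p ^ k))"
    using z_weight_ratio[OF assms(1)] by (simp add: prod.distrib[symmetric] in_prime_factors_iff)
  also have "(\<Prod>p\<in>prime_factors t. 1 / real p ^ (2 * k)) = 1 / real (\<Prod>(prime_factors t)) ^ (2 * k)"
    by (simp add: prod_dividef prod_power_distrib)
  finally show ?thesis
    using assms(2) by (simp add: prod_prime_factors_squarefree abs_moebius_squarefree flip: of_int_abs)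
qed

lemma kfree_sum_z_weight_power:
  assumes "k \<ge> 2" "t \<ge> 1"
  shows "prime_weight.kfree_sum (z_weight k) (k + 1) (t ^ k)
       = xi k * (\<bar>real_of_int (moebius t)\<bar> / real t ^ (2 * k) *
           (\<Prod>p\<in>prime_factors t. 1 / (1 - 2 / real p ^ k)))"
proof -
  interpret prime_weight "z_weight k" using assms(1) by (rule prime_weight_z_weight)
  have k: "k > 0" using assms(1) by simp
  show ?thesis
  proof (cases "squarefree t")
    case True
    have "xi k = euler_prod" unfolding xi_def euler_prod_def z_weight_def ..
    moreover have "kfree_sum (k + 1) (t ^ k)
        = euler_prod * (\<Prod>p\<in>prime_factors t. z_weight k p / (1 - z_weight k p))"
      by (rule kfree_sum_squarefree_power[OF k True])
    ultimately show ?thesis by (simp add: prod_z_weight_ratio_squarefree[OF assms(1) True])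
  next
    case False
    then have "kfree_sum (k + 1) (t ^ k) = 0"
      using assms(2) k
      by (intro kfree_sum_eq_0_unless_squarefree_power) (auto simp: power_eq_iff_eq_base)
    then show ?thesis using False by (simp add: moebius_eq_0_if_not_squarefree)
  qed
qed

lemma root_le_iff_le_power:
  fixes c t :: nat
  assumes "k > 0"
  shows "root k (real c) \<le> real t \<longleftrightarrow> c \<le> t ^ k"
proof -
  have "root k (real c) \<le> real t \<longleftrightarrow> root k (real c) \<le> root k (real t ^ k)"
    using assms by (simp add: real_root_power_cancel)
  also have "\<dots> \<longleftrightarrow> c \<le> t ^ k" using assms by (simp flip: of_nat_power)
  finally show ?thesis .
qed

theorem lemma2p3:
  fixes k c :: nat
  assumes "k \<ge> 2" and "c \<ge> 1"
  shows "z k c = xi k * (\<Sum>\<^sub>\<infinity> t \<in> {t. t \<ge> 1 \<and> root k (real c) \<le> real t}.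
            \<bar>real_of_int (moebius t)\<bar> / real t ^ (2 * k) *
            (\<Prod>p\<in>prime_factors t. 1 / (1 - 2 / real p ^ k)))"
proof -
  interpret prime_weight "z_weight k" using assms(1) by (rule prime_weight_z_weight)
  have k: "k > 0" using assms(1) by simp
  have "z k c = (\<Sum>\<^sub>\<infinity>r\<in>{r. r \<ge> 1 \<and> r \<ge> c}. kfree_sum (k + 1) r)"
    by (simp add: z_def kfree_sum_def rad_weight_def z_weight_def)
  also have "\<dots> = (\<Sum>\<^sub>\<infinity>t\<in>{t. t \<ge> 1 \<and> c \<le> t ^ k}. kfree_sum (k + 1) (t ^ k))"
    by (rule infsum_kfree_sum_eq_infsum_powers[OF k])
  also have "\<dots> = (\<Sum>\<^sub>\<infinity>t\<in>{t. t \<ge> 1 \<and> c \<le> t ^ k}. xi k *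
      (\<bar>real_of_int (moebius t)\<bar> / real t ^ (2 * k) * (\<Prod>p\<in>prime_factors t. 1 / (1 - 2 / real p ^ k))))"
    using kfree_sum_z_weight_power[OF assms(1)] by (intro infsum_cong) simp
  also have "\<dots> = xi k * (\<Sum>\<^sub>\<infinity>t\<in>{t. t \<ge> 1 \<and> c \<le> t ^ k}.
      \<bar>real_of_int (moebius t)\<bar> / real t ^ (2 * k) * (\<Prod>p\<in>prime_factors t. 1 / (1 - 2 / real p ^ k)))"
    by (rule infsum_cmult_right')
  also have "{t. t \<ge> 1 \<and> c \<le> t ^ k} = {t. t \<ge> 1 \<and> root k (real c) \<le> real t}"
    using root_le_iff_le_power[OF k] by auto
  finally show ?thesis .
qed

end
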